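(* Let $t\in\mathbb{Q}$, $t\neq 2$. Let $[x,y,1]$ be a point of $F_5\cap C_t$ (over $\overline{\mathbb{Q}}$) distinct from $P=[\zeta_3,\zeta_3^2,1]$ and $\overline P=[\zeta_3^2,\zeta_3,1]$. Then $f_t(x)=0$ and $y=\sum_{i=0}^5 a_i x^i$.
   Context: $F_5$ is the Fermat curve $x^5+y^5+z^5=0$ in $\mathbb{P}^2$; $\zeta_3$ is a primitive cube root of unity. For $t\in\mathbb{Q}$, $t\neq2$, $C_t$ is the conic $x^2+y^2+z^2+t(xy+xz+yz)=0$. Put $u=\frac{3t^2-2t+2}{t^2+t-1}$, $v=\frac{t^5-5t^4+10t^3-20t^2+15t-7}{(t-2)(t^2+t-1)^2}$, $w=\frac{-3t^5+10t^4-20t^3+20t^2-20t+6}{(t-2)(t^2+t-1)^2}$, and $f_t=X^6+uX^5+vX^4+wX^3+vX^2+uX+1\in\mathbb{Q}[X]$. Put $s=(t^4-3t^3-t^2+3t+1)(t-2)$ (nonzero for rational $t\ne2$) and $a_0=-\frac{(t^2+1)(t^3-t^2+2t-3)}{s}$, $a_1=-\frac{3t^7-9t^6+16t^5-15t^4+10t^3-11t^2+8t-7}{(t^2+t-1)s}$, $a_2=\frac{2t^8-14t^7+52t^6-99t^5+100t^4-54t^3+38t^2-44t+13}{(t^2+t-1)(t-2)s}$, $a_3=\frac{t^8+t^7-21t^6+65t^5-90t^4+78t^3-57t^2+32t-15}{(t^2+t-1)(t-2)s}$, $a_4=-\frac{2t^5-6t^4+13t^3-14t^2+7t-5}{s}$,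 $a_5=-\frac{(t^2+t-1)(t^3-t^2+2t-3)}{s}$. *)

theory Defs
  imports "HOL-Computational_Algebra.Polynomial" Complex_Main
begin

definition zeta3 :: complex where
  "zeta3 = cis (2 * pi / 3)"

definition Fermat5 :: "complex \<Rightarrow> complex \<Rightarrow> complex \<Rightarrow> bool" where
  "Fermat5 x y z \<longleftrightarrow> x^5 + y^5 + z^5 = 0"

definition conicC :: "rat \<Rightarrow> complex \<Rightarrow> complex \<Rightarrow> complex \<Rightarrow> bool" where
  "conicC t x y z \<longleftrightarrow>
     x^2 + y^2 + z^2 + of_rat t * (x*y + x*z + y*z) = 0"

definition uu :: "rat \<Rightarrow> rat" where
  "uu t = (3*t^2 - 2*t + 2) / (t^2 + t - 1)"

definition vv :: "rat \<Rightarrow> rat" where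
  "vv t = (t^5 - 5*t^4 + 10*t^3 - 20*t^2 + 15*t - 7) / ((t - 2) * (t^2 + t - 1)^2)"

definition ww :: "rat \<Rightarrow> rat" where
  "ww t = (-3*t^5 + 10*t^4 - 20*t^3 + 20*t^2 - 20*t + 6) / ((t - 2) * (t^2 + t - 1)^2)"

definition ft :: "rat \<Rightarrow> rat poly" where
  "ft t = [:1, uu t, vv t, ww t, vv t, uu t, 1:]"

definition ss :: "rat \<Rightarrow> rat" where
  "ss t = (t^4 - 3*t^3 - t^2 + 3*t + 1) * (t - 2)"

definition acoef :: "rat \<Rightarrow> nat \<Rightarrow> rat" where
  "acoef t i =
    (if i = 0 then - ((t^2 + 1) * (t^3 - t^2 + 2*t - 3)) / ss t
     else if i = 1 then - (3*t^7 - 9*t^6 + 16*t^5 - 15*t^4 + 10*t^3 - 11*t^2 + 8*t - 7)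
                         / ((t^2 + t - 1) * ss t)
     else if i = 2 then (2*t^8 - 14*t^7 + 52*t^6 - 99*t^5 + 100*t^4 - 54*t^3 + 38*t^2 - 44*t + 13)
                         / ((t^2 + t - 1) * (t - 2) * ss t)
     else if i = 3 then (t^8 + t^7 - 21*t^6 + 65*t^5 - 90*t^4 + 78*t^3 - 57*t^2 + 32*t - 15)
                         / ((t^2 + t - 1) * (t - 2) * ss t)
     else if i = 4 then - (2*t^5 - 6*t^4 + 13*t^3 - 14*t^2 + 7*t - 5) / ss t
     else if i = 5 then - ((t^2 + t - 1) * (t^3 - t^2 + 2*t - 3)) / ss t
     else 0)"

end

(* Modulo the conic, viewed as a quadratic in y, x^5 + y^5 + 1 reduces to a linear polynomial
   alpha(x) y + beta(x).  Eliminating y between it and the conic gives, up to sign,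
   (x^2 + x + 1)^2 (t - 2)(t^2 + t - 1)^2 f_t(x).  On x^2 + x + 1 = 0 the conic splits into
   the lines y = x^2 and y = (t - 1) x^2; the first meets F_5 only in P and its conjugate,
   the second only if (t - 1)^5 = 1, i.e. t = 2.  Hence f_t(x) = 0.  A Bezout identity shows that alpha and f_t
   have no common root for rational t, because the resulting polynomial in t has no rational
   zero; so y = -beta(x)/alpha(x), and a second identity reduces this quotient modulo f_t to
   the polynomial sum a_i x^i. *)

theory Submission
  imports Defs
begin

definition fermat_rem_lin :: "'a::idom \<Rightarrow> 'a \<Rightarrow> 'a" where
  "fermat_rem_lin x T =
    1 - 3*T^2 + T^4 + 2*x*T - 6*x*T^2 - 3*x*T^3 + 4*x*T^4 + 2*x^2 - 5*x^2*T^2 - 6*x^2*T^3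
    + 6*x^2*T^4 + 2*x^3*T - 6*x^3*T^2 - 3*x^3*T^3 + 4*x^3*T^4 + x^4 - 3*x^4*T^2 + x^4*T^4"

definition fermat_rem_const :: "'a::idom \<Rightarrow> 'a \<Rightarrow> 'a" where
  "fermat_rem_const x T =
    1 - 2*T + T^3 - 2*x*T - 4*x*T^2 + 3*x*T^3 + x*T^4 - 4*x^2*T - 4*x^2*T^2 + 2*x^2*T^3
    + 3*x^2*T^4 - 4*x^3*T - 4*x^3*T^2 + 2*x^3*T^3 + 3*x^3*T^4 - 2*x^4*T - 4*x^4*T^2 + 3*x^4*T^3
    + x^4*T^4 + x^5 - 2*x^5*T + x^5*T^3"

definition ft_cleared :: "'a::idom \<Rightarrow> 'a \<Rightarrow> 'a" where
  "ft_cleared x T =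
     (T - 2) * (T^2 + T - 1)^2 * (1 + x^6)
     + (3*T^2 - 2*T + 2) * (T - 2) * (T^2 + T - 1) * (x + x^5)
     + (T^5 - 5*T^4 + 10*T^3 - 20*T^2 + 15*T - 7) * (x^2 + x^4)
     + (-3*T^5 + 10*T^4 - 20*T^3 + 20*T^2 - 20*T + 6) * x^3"

definition y_denom :: "'a::idom \<Rightarrow> 'a" where
  "y_denom T = (T^2 + T - 1) * (T - 2) * ((T^4 - 3*T^3 - T^2 + 3*T + 1) * (T - 2))"

definition y_numer :: "'a::idom \<Rightarrow> 'a \<Rightarrow> 'a" where
  "y_numer x T =
     - (T^2 + 1) * (T^3 - T^2 + 2*T - 3) * ((T^2 + T - 1) * (T - 2))
     - (3*T^7 - 9*T^6 + 16*T^5 - 15*T^4 + 10*T^3 - 11*T^2 + 8*T - 7) * (T - 2) * x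
     + (2*T^8 - 14*T^7 + 52*T^6 - 99*T^5 + 100*T^4 - 54*T^3 + 38*T^2 - 44*T + 13) * x^2
     + (T^8 + T^7 - 21*T^6 + 65*T^5 - 90*T^4 + 78*T^3 - 57*T^2 + 32*T - 15) * x^3
     - (2*T^5 - 6*T^4 + 13*T^3 - 14*T^2 + 7*T - 5) * ((T^2 + T - 1) * (T - 2)) * x^4
     - (T^2 + T - 1) * (T^3 - T^2 + 2*T - 3) * ((T^2 + T - 1) * (T - 2)) * x^5"

lemma fermat_eq_rem_mod_conic:
  fixes x y T :: "'a::idom"
  assumes "y^2 + T*(x + 1)*y + (x^2 + T*x + 1) = 0"
  shows "x^5 + y^5 + 1 = fermat_rem_lin x T * y + fermat_rem_const x T"
proof -
  have "x^5 + y^5 + 1 =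
    (2*T - T^3 - y + y*T^2 - y^2*T + y^3 + 2*x*T + 2*x*T^2 - 3*x*T^3 - x*y*T + 2*x*y*T^2
     - x*y^2*T + 2*x^2*T + 2*x^2*T^2 - 3*x^2*T^3 - x^2*y + x^2*y*T^2 + 2*x^3*T - x^3*T^3)
    * (y^2 + T*(x + 1)*y + (x^2 + T*x + 1)) + fermat_rem_lin x T * y + fermat_rem_const x T"
    unfolding fermat_rem_lin_def fermat_rem_const_def by algebra
  with assms show ?thesis by simp
qed

lemma linear_quadratic_common_root:
  fixes a b p q y :: "'a::idom"
  assumes "a*y + b = 0" and "y^2 + p*y + q = 0"
  shows "b^2 - p*a*b + q*a^2 = 0"
proof -
  have "b^2 - p*a*b + q*a^2 = (a*y + b) * (b - a*y - p*a) + a^2 * (y^2 + p*y + q)"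
    by algebra
  with assms show ?thesis by simp
qed

lemma fermat_rem_resultant:
  fixes x T :: "'a::idom"
  shows "fermat_rem_const x T ^ 2 - T*(x + 1) * fermat_rem_lin x T * fermat_rem_const x T
         + (x^2 + T*x + 1) * fermat_rem_lin x T ^ 2 = - ((x^2 + x + 1)^2 * ft_cleared x T)"
  unfolding fermat_rem_lin_def fermat_rem_const_def ft_cleared_def by algebra

(* The cofactors in this and the next lemma come from the extended Euclidean algorithm
   in Q(T)[x], with denominators cleared. *)
lemma fermat_rem_lin_ft_cleared_common_zero:
  fixes x T :: "'a::idom"
  assumes "fermat_rem_lin x T = 0" and "ft_cleared x T = 0"
  shows "(T - 2)*(T^2 + T - 1)*(T^4 - 3*T^3 - T^2 + 3*T + 1)*(T^4 - 3*T^3 + 4*T^2 - 2*T + 1) = 0"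
proof -
  have "((T - 2)*(T^2 + T - 1)*(T^4 - 3*T^3 - T^2 + 3*T + 1)*(T^4 - 3*T^3 + 4*T^2 - 2*T + 1))^2 =
    (6 - 17*T + 23*T^2 + 62*T^3 - 375*T^4 + 436*T^5 - 37*T^6 + 1068*T^7 - 4028*T^8 + 4225*T^9
     + 2197*T^10 - 10069*T^11 + 10746*T^12 - 4506*T^13 - 1050*T^14 + 2198*T^15 - 1126*T^16
     + 279*T^17 - 29*T^18 - 16*x + 48*x*T + 18*x*T^2 - 289*x*T^3 + 665*x*T^4 - 471*x*T^5
     - 7*x*T^6 - 2157*x*T^7 + 8176*x*T^8 - 11415*x*T^9 + 3858*x*T^10 + 11471*x*T^11
     - 23369*x*T^12 + 24797*x*T^13 - 17615*x*T^14 + 8597*x*T^15 - 2771*x*T^16 + 534*x*T^17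
     - 47*x*T^18 + 21*x^2 - 58*x^2*T - 69*x^2*T^2 + 392*x^2*T^3 - 360*x^2*T^4 - 309*x^2*T^5
     - 28*x^2*T^6 + 5691*x^2*T^7 - 16463*x^2*T^8 + 20410*x^2*T^9 - 5438*x^2*T^10
     - 22816*x^2*T^11 + 43842*x^2*T^12 - 43906*x^2*T^13 + 28635*x^2*T^14 - 12597*x^2*T^15
     + 3641*x^2*T^16 - 632*x^2*T^17 + 51*x^2*T^18 - 28*x^3 + 44*x^3*T + 132*x^3*T^2
     - 331*x^3*T^3 + 105*x^3*T^4 + 437*x^3*T^5 + 1304*x^3*T^6 - 8748*x^3*T^7 + 17559*x^3*T^8
     - 14380*x^3*T^9 - 7066*x^3*T^10 + 32763*x^3*T^11 - 42076*x^3*T^12 + 31633*x^3*T^13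
     - 15180*x^3*T^14 + 4521*x^3*T^15 - 713*x^3*T^16 + 21*x^3*T^17 + 7*x^3*T^18 + 18*x^4
     - 37*x^4*T - 90*x^4*T^2 + 212*x^4*T^3 + 90*x^4*T^4 - 77*x^4*T^5 - 2362*x^4*T^6
     + 7785*x^4*T^7 - 10313*x^4*T^8 + 1235*x^4*T^9 + 16601*x^4*T^10 - 27079*x^4*T^11
     + 20345*x^4*T^12 - 5246*x^4*T^13 - 4015*x^4*T^14 + 4529*x^4*T^15 - 2006*x^4*T^16
     + 455*x^4*T^17 - 44*x^4*T^18 - 8*x^5 + 20*x^5*T + 44*x^5*T^2 - 126*x^5*T^3 - 10*x^5*T^4
     - 208*x^5*T^5 + 1555*x^5*T^6 - 2476*x^5*T^7 + 179*x^5*T^8 + 4910*x^5*T^9 - 7536*x^5*T^10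
     + 3830*x^5*T^11 + 1943*x^5*T^12 - 3522*x^5*T^13 + 1485*x^5*T^14 + 196*x^5*T^15
     - 400*x^5*T^16 + 142*x^5*T^17 - 18*x^5*T^18) * fermat_rem_lin x T
    + (1 - 4*T + 12*T^2 + 24*T^3 - 114*T^4 + 46*T^5 - 138*T^6 + 638*T^7 - 239*T^8 - 1946*T^9
     + 3597*T^10 - 1794*T^11 - 2082*T^12 + 4026*T^13 - 3036*T^14 + 1268*T^15 - 293*T^16
     + 30*T^17 - 6*x + 2*x*T + 52*x*T^2 - 41*x*T^3 - 60*x*T^4 + 73*x*T^5 - 364*x*T^6
     + 530*x*T^7 + 1176*x*T^8 - 4640*x*T^9 + 5954*x*T^10 - 1265*x*T^11 - 6524*x*T^12
     + 9991*x*T^13 - 7290*x*T^14 + 3043*x*T^15 - 708*x*T^16 + 73*x*T^17 + x^2 - 4*x^2*T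
     + 10*x^2*T^2 + 24*x^2*T^3 - 15*x^2*T^4 - 160*x^2*T^5 - 545*x^2*T^6 + 2528*x^2*T^7
     - 2789*x^2*T^8 - 1510*x^2*T^9 + 7463*x^2*T^10 - 8092*x^2*T^11 + 2072*x^2*T^12
     + 3676*x^2*T^13 - 4335*x^2*T^14 + 2174*x^2*T^15 - 561*x^2*T^16 + 62*x^2*T^17 - 4*x^3
     + 34*x^3*T^2 + 2*x^3*T^3 - 70*x^3*T^4 - 167*x^3*T^5 + 392*x^3*T^6 + 183*x^3*T^7
     - 1372*x^3*T^8 + 1620*x^3*T^9 + 250*x^3*T^10 - 2437*x^3*T^11 + 2314*x^3*T^12
     - 577*x^3*T^13 - 480*x^3*T^14 + 436*x^3*T^15 - 142*x^3*T^16 + 18*x^3*T^17) * ft_cleared x T"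
    unfolding fermat_rem_lin_def ft_cleared_def by algebra
  with assms show ?thesis by simp
qed

lemma fermat_rem_solution_mod_ft_cleared:
  fixes x T :: "'a::idom"
  assumes "ft_cleared x T = 0"
  shows "fermat_rem_lin x T * y_numer x T + y_denom T * fermat_rem_const x T = 0"
proof -
  have "fermat_rem_lin x T * y_numer x T + y_denom T * fermat_rem_const x T =
    (- 1 + 2*T - 9*T^2 - 3*T^3 + 16*T^4 - 9*T^5 + 3*T^6 - T^7 + 5*x - 20*x*T^2 - 8*x*T^3
     + 36*x*T^4 - 22*x*T^5 + 9*x*T^6 - 3*x*T^7 + x^2 + 4*x^2*T - 25*x^2*T^2 + 12*x^2*T^3
     + 11*x^2*T^4 - 10*x^2*T^5 + 7*x^2*T^6 - 3*x^2*T^7 + 3*x^3 - 2*x^3*T - 8*x^3*T^2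
     + 5*x^3*T^3 + x^3*T^5 + x^3*T^6 - x^3*T^7) * ft_cleared x T"
    unfolding fermat_rem_lin_def fermat_rem_const_def ft_cleared_def y_numer_def y_denom_def
    by algebra
  with assms show ?thesis by simp
qed

lemma rat_root_of_monic_int_poly_in_Ints:
  fixes t :: rat and c :: "nat \<Rightarrow> int"
  assumes "t^n = (\<Sum>i<n. of_int (c i) * t^i)"
  shows "t \<in> \<int>"
proof -
  obtain a b where q: "quotient_of t = (a, b)" by (cases "quotient_of t")
  have t: "t = of_int a / of_int b" by (rule quotient_of_div[OF q])
  have b_pos: "b > 0" by (rule quotient_of_denom_pos[OF q])
  have "of_int (a^n) = (of_int (\<Sum>i<n. c i * a^i * b^(n - i)) :: rat)"
  proof -
    have "of_int (a^n) = (t^n * of_int b ^ n :: rat)"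
      using b_pos by (simp add: t power_divide)
    also have "\<dots> = (\<Sum>i<n. of_int (c i) * t^i * of_int b ^ n)"
      by (simp add: assms sum_distrib_right)
    also have "\<dots> = (\<Sum>i<n. of_int (c i * a^i * b^(n - i)))"
    proof (rule sum.cong)
      fix i assume "i \<in> {..<n}"
      then have "(of_int b :: rat) ^ n = of_int b ^ i * of_int b ^ (n - i)"
        by (simp flip: power_add)
      then show "of_int (c i) * t^i * of_int b ^ n = (of_int (c i * a^i * b^(n - i)) :: rat)"
        using b_pos by (simp add: t power_divide)
    qed simp
    finally show ?thesis by simp
  qed
  then have "a^n = (\<Sum>i<n. c i * a^i * b^(n - i))"
    by (simp only: of_int_eq_iff)
  then have "b dvd a^n"
    by (metis (no_types, lifting) dvd_mult dvd_power dvd_refl dvd_sum lessThan_iff zero_less_diff)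
  moreover have "coprime b (a^n)"
    using quotient_of_coprime[OF q] by (simp add: coprime_commute)
  ultimately have "b dvd 1"
    by (metis coprime_common_divisor dvd_refl)
  with b_pos have "b = 1"
    using zdvd_imp_le[of b 1] by linarith
  then show ?thesis by (simp add: t)
qed

lemma rat_quadratic_nonzero: "(t::rat)^2 + t - 1 \<noteq> 0"
proof
  assume root: "t^2 + t - 1 = 0"
  then have "t^2 = (\<Sum>i<2. of_int ([1, -1] ! i) * t^i)"
    by (simp add: eval_nat_numeral algebra_simps)
  then obtain a where "t = of_int a"
    by (metis rat_root_of_monic_int_poly_in_Ints Ints_cases)
  with root have "of_int (a * (a + 1)) = (of_int 1 :: rat)"
    by (simp add: algebra_simps power2_eq_square)
  then have "a * (a + 1) = 1"
    by (simp only: of_int_eq_iff)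
  then show False by (auto simp: zmult_eq_1_iff)
qed

lemma rat_quartic_nonzero: "(t::rat)^4 - 3*t^3 - t^2 + 3*t + 1 \<noteq> 0"
proof
  assume root: "t^4 - 3*t^3 - t^2 + 3*t + 1 = 0"
  then have "t^4 = (\<Sum>i<4. of_int ([-1, -3, 1, 3] ! i) * t^i)"
    by (simp add: eval_nat_numeral algebra_simps)
  then obtain a where "t = of_int a"
    by (metis rat_root_of_monic_int_poly_in_Ints Ints_cases)
  with root have "of_int (a^4 - 3*a^3 - a^2 + 3*a + 1) = (0 :: rat)"
    by simp
  then have int_root: "a^4 - 3*a^3 - a^2 + 3*a + 1 = 0"
    by (simp only: of_int_eq_0_iff)
  then have "a * (3*a^2 + a - 3 - a^3) = 1"
    by algebra
  then have "a = 1 \<or> a = -1"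
    unfolding zmult_eq_1_iff by blast
  with int_root show False by auto
qed

lemma quartic_pos:
  fixes t :: "'a::linordered_idom"
  shows "t^4 - 3*t^3 + 4*t^2 - 2*t + 1 > 0"
proof -
  have "28 * (t^4 - 3*t^3 + 4*t^2 - 2*t + 1) = 7*(2*t^2 - 3*t)^2 + (7*t - 4)^2 + 12"
    by algebra
  moreover have "0 \<le> 7*(2*t^2 - 3*t)^2" "0 \<le> (7*t - 4)^2" by simp_all
  ultimately have "28 * (t^4 - 3*t^3 + 4*t^2 - 2*t + 1) > 0" by linarith
  then show ?thesis by (simp add: zero_less_mult_iff)
qed

lemma odd_power_eq_1_iff:
  fixes a :: "'a::linordered_idom"
  assumes "odd n"
  shows "a^n = 1 \<longleftrightarrow> a = 1"
proof
  assume an: "a^n = 1"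
  then have "0 \<le> a" using zero_le_odd_power[OF assms, of a] by simp
  moreover have "0 < n" using assms by presburger
  ultimately show "a = 1"
    using an power_eq_iff_eq_base[of n a 1] by simp
qed simp

lemmas of_rat_field_simps =
  of_rat_add of_rat_diff of_rat_minus of_rat_mult of_rat_divide of_rat_power of_rat_numeral_eq

lemma of_rat_parameter_factors_nonzero:
  fixes t :: rat
  assumes "t \<noteq> 2"
  defines "T \<equiv> (of_rat t :: 'a::field_char_0)"
  shows "T - 2 \<noteq> 0" and "T^2 + T - 1 \<noteq> 0" and "T^4 - 3*T^3 - T^2 + 3*T + 1 \<noteq> 0"
    and "T^4 - 3*T^3 + 4*T^2 - 2*T + 1 \<noteq> 0"
proof -
  have "of_rat (t - 2) \<noteq> (0::'a)" using assms by simp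
  then show "T - 2 \<noteq> 0" by (simp add: T_def of_rat_field_simps)
  have "of_rat (t^2 + t - 1) \<noteq> (0::'a)" using rat_quadratic_nonzero by simp
  then show "T^2 + T - 1 \<noteq> 0" by (simp add: T_def of_rat_field_simps)
  have "of_rat (t^4 - 3*t^3 - t^2 + 3*t + 1) \<noteq> (0::'a)" using rat_quartic_nonzero by simp
  then show "T^4 - 3*T^3 - T^2 + 3*T + 1 \<noteq> 0"
    by (simp add: T_def of_rat_field_simps)
  have "of_rat (t^4 - 3*t^3 + 4*t^2 - 2*t + 1) \<noteq> (0::'a)" using quartic_pos[of t] by simp
  then show "T^4 - 3*T^3 + 4*T^2 - 2*T + 1 \<noteq> 0"
    by (simp add: T_def of_rat_field_simps)
qed

lemma poly_ft_cleared:
  fixes t :: rat and x :: "'a::field_char_0"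
  assumes "t \<noteq> 2"
  defines "T \<equiv> (of_rat t :: 'a)"
  shows "(T - 2) * (T^2 + T - 1)^2 * poly (map_poly of_rat (ft t)) x = ft_cleared x T"
proof -
  note nonzero = of_rat_parameter_factors_nonzero[OF assms(1), where 'a='a, folded T_def]
  have "of_rat (uu t) = (3*T^2 - 2*T + 2) / (T^2 + T - 1)"
    "of_rat (vv t) = (T^5 - 5*T^4 + 10*T^3 - 20*T^2 + 15*T - 7) / ((T - 2) * (T^2 + T - 1)^2)"
    "of_rat (ww t) = (-3*T^5 + 10*T^4 - 20*T^3 + 20*T^2 - 20*T + 6) / ((T - 2) * (T^2 + T - 1)^2)"
    by (simp_all add: uu_def vv_def ww_def T_def of_rat_field_simps)
  then show ?thesis
    using nonzero by (simp add: ft_def map_poly_pCons ft_cleared_def field_simps) algebra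
qed

lemma y_denom_times_acoef_sum:
  fixes t :: rat and x :: "'a::field_char_0"
  assumes "t \<noteq> 2"
  defines "T \<equiv> (of_rat t :: 'a)"
  shows "y_denom T * (\<Sum>i = 0..5. of_rat (acoef t i) * x^i) = y_numer x T"
proof -
  note nonzero = of_rat_parameter_factors_nonzero[OF assms(1), where 'a='a, folded T_def]
  have ss: "of_rat (ss t) = (T^4 - 3*T^3 - T^2 + 3*T + 1) * (T - 2)"
    by (simp add: ss_def T_def of_rat_field_simps)
  let ?c = "\<lambda>i. y_denom T * of_rat (acoef t i)"
  have coeffs: "?c 0 = - (T^2 + 1) * (T^3 - T^2 + 2*T - 3) * ((T^2 + T - 1) * (T - 2))"
    "?c 1 = - (3*T^7 - 9*T^6 + 16*T^5 - 15*T^4 + 10*T^3 - 11*T^2 + 8*T - 7) * (T - 2)"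
    "?c 2 = 2*T^8 - 14*T^7 + 52*T^6 - 99*T^5 + 100*T^4 - 54*T^3 + 38*T^2 - 44*T + 13"
    "?c 3 = T^8 + T^7 - 21*T^6 + 65*T^5 - 90*T^4 + 78*T^3 - 57*T^2 + 32*T - 15"
    "?c 4 = - (2*T^5 - 6*T^4 + 13*T^3 - 14*T^2 + 7*T - 5) * ((T^2 + T - 1) * (T - 2))"
    "?c 5 = - (T^2 + T - 1) * (T^3 - T^2 + 2*T - 3) * ((T^2 + T - 1) * (T - 2))"
    using nonzero
    by (simp_all add: acoef_def ss y_denom_def of_rat_field_simps flip: T_def)
      (simp_all add: algebra_simps)
  have "y_denom T * (\<Sum>i = 0..5. of_rat (acoef t i) * x^i) =
      ?c 0 + ?c 1 * x + ?c 2 * x^2 + ?c 3 * x^3 + ?c 4 * x^4 + ?c 5 * x^5"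
    by (simp add: numeral_eq_Suc atLeast0_atMost_Suc algebra_simps)
  also have "\<dots> = y_numer x T"
    unfolding coeffs y_numer_def by algebra
  finally show ?thesis .
qed

lemma conic_fermat_on_cyclotomic_line:
  fixes x y T :: "'a::idom"
  assumes x: "x^2 + x + 1 = 0"
    and conic: "y^2 + T*(x + 1)*y + (x^2 + T*x + 1) = 0"
    and fermat: "x^5 + y^5 + 1 = 0"
  shows "y = x^2 \<or> (T - 1)^5 = 1"
proof -
  have "(y - x^2) * (y - (T - 1)*x^2) =
      (y^2 + T*(x + 1)*y + (x^2 + T*x + 1)) - (x^2 + x + 1) * (T*y + 1 - (T - 1)*x*(x - 1))"
    by algebra
  then have "y = x^2 \<or> y = (T - 1)*x^2"
    using x conic by simp
  moreover have "(T - 1)^5 = 1" if y: "y = (T - 1)*x^2"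
  proof -
    have "x * ((T - 1)^5 - 1) = 0"
      using x fermat y by algebra
    moreover have "x \<noteq> 0" using x by auto
    ultimately show ?thesis by simp
  qed
  ultimately show ?thesis by blast
qed

lemma zeta3_cyclotomic: "zeta3^2 + zeta3 + 1 = 0"
  by (simp add: complex_eq_iff zeta3_def power2_eq_square cos_120 sin_120)

lemma cyclotomic_point_cases:
  fixes x :: complex
  assumes "x^2 + x + 1 = 0"
  shows "(x, x^2) = (zeta3, zeta3^2) \<or> (x, x^2) = (zeta3^2, zeta3)"
proof -
  have "(x - zeta3) * (x - zeta3^2) = 0"
    using assms zeta3_cyclotomic by algebra
  moreover have "(zeta3^2)^2 = zeta3"
    using zeta3_cyclotomic by algebra
  ultimately show ?thesis by auto
qed

lemma cyclotomic_excluded: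
  fixes t :: rat and x y :: complex
  assumes "t \<noteq> 2"
    and conic: "y^2 + of_rat t*(x + 1)*y + (x^2 + of_rat t*x + 1) = 0"
    and fermat: "x^5 + y^5 + 1 = 0"
    and "(x, y) \<noteq> (zeta3, zeta3^2)" and "(x, y) \<noteq> (zeta3^2, zeta3)"
  shows "x^2 + x + 1 \<noteq> 0"
proof
  assume x: "x^2 + x + 1 = 0"
  have "(t - 1)^5 \<noteq> 1"
    using assms(1) by (simp add: odd_power_eq_1_iff)
  then have "(of_rat t - 1)^5 \<noteq> (1::complex)"
    by (metis of_rat_1 of_rat_diff of_rat_eq_iff of_rat_power)
  then have "y = x^2"
    using conic_fermat_on_cyclotomic_line[OF x conic fermat] by simp
  with cyclotomic_point_cases[OF x] assms(4,5) show False by blast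
qed

theorem proposition2:
  fixes t :: rat and x y :: complex
  assumes "t \<noteq> 2"
    and "algebraic x" and "algebraic y"
    and "Fermat5 x y 1" and "conicC t x y 1"
    and "(x, y) \<noteq> (zeta3, zeta3^2)" and "(x, y) \<noteq> (zeta3^2, zeta3)"
  shows "poly (map_poly of_rat (ft t)) x = 0
         \<and> y = (\<Sum>i = 0..5. of_rat (acoef t i) * x ^ i)"
proof -
  define T where "T = (of_rat t :: complex)"
  note nonzero = of_rat_parameter_factors_nonzero[OF assms(1), where 'a=complex, folded T_def]
  have fermat: "x^5 + y^5 + 1 = 0"
    using assms(4) by (simp add: Fermat5_def)
  have conic: "y^2 + T*(x + 1)*y + (x^2 + T*x + 1) = 0"
    using assms(5) by (simp add: conicC_def T_def algebra_simps power2_eq_square)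
  have rem: "fermat_rem_lin x T * y + fermat_rem_const x T = 0"
    using fermat_eq_rem_mod_conic[OF conic] fermat by simp
  have ft: "ft_cleared x T = 0"
    using linear_quadratic_common_root[OF rem conic] fermat_rem_resultant[of x T]
      cyclotomic_excluded[OF assms(1) conic[unfolded T_def] fermat assms(6,7)] by simp
  have "fermat_rem_lin x T \<noteq> 0"
    using fermat_rem_lin_ft_cleared_common_zero[OF _ ft] nonzero by auto
  then have "y_denom T * y = y_numer x T"
    using fermat_rem_solution_mod_ft_cleared[OF ft] rem by algebra
  moreover have "y_denom T \<noteq> 0"
    using nonzero by (simp add: y_denom_def)
  ultimately have "y = (\<Sum>i = 0..5. of_rat (acoef t i) * x ^ i)"
    using y_denom_times_acoef_sum[OF assms(1), of x, folded T_def] by (metis mult_left_cancel)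
  moreover have "poly (map_poly of_rat (ft t)) x = 0"
    using poly_ft_cleared[OF assms(1), of x, folded T_def] ft nonzero by simp
  ultimately show ?thesis by simp
qed

end
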